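(* Let $f(z)=z+\sum_{k=2}^{\infty}a_kz^k$ be analytic in $\mathbb{D}=\{z:|z|<1\}$ with $zf'(z)-f(z)=\frac12 z^2\phi(z)$ for all $z\in\mathbb{D}$, where $\phi$ is analytic in $\mathbb{D}$ and $|\phi(z)|\le1$, and let $s_n(z;f)=z+\sum_{k=2}^n a_kz^k$. Then for each $r\in(0,1)$ and $n\ge2$, \[\left|\frac{s_n'(z;f)}{f'(z)}-1\right|\le |z|^n\left(\frac{n+1}{2n}+B_n\frac{|z|}{r-|z|}\right),\qquad |z|<r,\] where $B_n=\dfrac{\sqrt{2r-r^2}}{2(1-r)r^n}\bigl(n+1+\ln(n-1)+\gamma\bigr)$ and $\gamma\approx0.57722$ is the Euler–Mascheroni constant. *)

theory Defs
  imports "HOL-Analysis.Analysis"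
begin

definition taylor_coef :: "(complex \<Rightarrow> complex) \<Rightarrow> nat \<Rightarrow> complex" where
  "taylor_coef f k = (deriv ^^ k) f 0 / of_nat (fact k)"

definition partial_sum :: "(complex \<Rightarrow> complex) \<Rightarrow> nat \<Rightarrow> complex \<Rightarrow> complex" where
  "partial_sum f n z = z + (\<Sum>k=2..n. taylor_coef f k * z ^ k)"

end

theory Submission
  imports Defs "HOL-Complex_Analysis.Complex_Analysis"
begin

(*
  Write f(z) = z g(z); the hypothesis says z f' - f = z^2 g' = z^2 phi/2 with |phi| <= 1.
  The k-th Taylor coefficient of z f' - f is (k - 1) a_k, so Cauchy's inequality on the unit
  disc gives |(k - 1) a_k| <= 1/2. Hence the Taylor coefficients k a_k of f' beyond index n are
  at most (n + 1)/(2n), and the tail f' - s_n' is at most (n + 1)/(2n) |z|^n/(1 - |z|).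
  On the other hand |g'| <= 1/2 gives |g(z) - 1| <= |z|/2, so |f'(z)| = |g + z g'| >= 1 - |z|.
  Dividing gives the estimate with B_n replaced by (n + 1) r/(n (1 - r)), which is at most the
  B_n of the statement.
*)

lemma Cauchy_inequality_ball:
  fixes g :: "complex \<Rightarrow> complex"
  assumes holg: "g holomorphic_on ball \<xi> R" and "0 < R"
    and bnd: "\<And>w. w \<in> ball \<xi> R \<Longrightarrow> norm (g w) \<le> C"
  shows "norm ((deriv ^^ k) g \<xi>) \<le> fact k * C / R ^ k"
proof -
  have inner: "norm ((deriv ^^ k) g \<xi>) \<le> fact k * C / \<rho> ^ k" if "0 < \<rho>" "\<rho> < R" for \<rho>
  proof (rule Cauchy_inequality)
    show "g holomorphic_on ball \<xi> \<rho>"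
      using that by (intro holomorphic_on_subset[OF holg]) auto
    show "continuous_on (cball \<xi> \<rho>) g"
      using that by (intro continuous_on_subset[OF holomorphic_on_imp_continuous_on[OF holg]]) auto
    show "norm (g x) \<le> C" if "norm (\<xi> - x) = \<rho>" for x
      using that \<open>\<rho> < R\<close> by (intro bnd) (simp add: dist_norm)
  qed fact
  have "((\<lambda>\<rho>. fact k * C / \<rho> ^ k) \<longlongrightarrow> fact k * C / R ^ k) (at_left R)"
    using \<open>0 < R\<close> by (intro tendsto_intros) auto
  moreover have "\<forall>\<^sub>F \<rho> in at_left R. norm ((deriv ^^ k) g \<xi>) \<le> fact k * C / \<rho> ^ k"
    using eventually_at_left_real[OF \<open>0 < R\<close>] by eventually_elim (use inner in auto)
  ultimately show ?thesis
    by (intro tendsto_le[OF trivial_limit_at_left_real _ tendsto_const])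
qed

lemma taylor_coef_deriv:
  "taylor_coef (deriv f) m = of_nat (Suc m) * taylor_coef f (Suc m)"
proof -
  have "(deriv ^^ m) (deriv f) = (deriv ^^ Suc m) f"
    by (simp only: funpow_Suc_right o_apply)
  moreover have "(of_nat (fact (Suc m)) :: complex) = of_nat (Suc m) * of_nat (fact m)"
    by (simp only: fact_Suc of_nat_mult of_nat_id)
  ultimately show ?thesis
    unfolding taylor_coef_def by (simp add: field_simps del: of_nat_Suc of_nat_fact)
qed

lemma higher_deriv_z_deriv_minus_at_0:
  fixes f :: "complex \<Rightarrow> complex"
  assumes holf: "f holomorphic_on S" and "open S" "0 \<in> S"
  shows "(deriv ^^ k) (\<lambda>w. w * deriv f w - f w) 0 = (of_nat k - 1) * (deriv ^^ k) f 0"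
proof (cases k)
  case 0
  then show ?thesis by simp
next
  case (Suc j)
  have holf': "deriv f holomorphic_on S"
    using holf \<open>open S\<close> by (rule holomorphic_deriv)
  have "(deriv ^^ k) (\<lambda>w. w * deriv f w) 0
      = (\<Sum>i = 0..k. of_nat (k choose i) * (deriv ^^ i) (\<lambda>w. w) 0 * (deriv ^^ (k - i)) (deriv f) 0)"
    using assms holf' by (intro higher_deriv_mult) (auto intro: holomorphic_intros)
  \<comment> \<open>all derivatives of the identity vanish at 0 except the first\<close>
  also have "\<dots> = (\<Sum>i = 0..k. if i = 1 then of_nat k * (deriv ^^ j) (deriv f) 0 else 0)"
    using Suc by (intro sum.cong) auto
  also have "\<dots> = of_nat k * (deriv ^^ k) f 0"
    using Suc by (simp only: funpow_Suc_right o_apply) simp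
  finally have "(deriv ^^ k) (\<lambda>w. w * deriv f w) 0 = of_nat k * (deriv ^^ k) f 0" .
  moreover have "(deriv ^^ k) (\<lambda>w. w * deriv f w - f w) 0
      = (deriv ^^ k) (\<lambda>w. w * deriv f w) 0 - (deriv ^^ k) f 0"
    using assms holf' by (intro higher_deriv_diff) (auto intro: holomorphic_intros)
  ultimately show ?thesis
    by (simp add: algebra_simps)
qed

lemma norm_taylor_coef_le:
  fixes f :: "complex \<Rightarrow> complex"
  assumes holf: "f holomorphic_on ball 0 1"
    and bnd: "\<And>w. w \<in> ball 0 1 \<Longrightarrow> norm (w * deriv f w - f w) \<le> M"
  shows "norm ((of_nat k - 1) * taylor_coef f k) \<le> M"
proof -
  have "norm ((deriv ^^ k) (\<lambda>w. w * deriv f w - f w) 0) \<le> fact k * M / 1 ^ k"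
    using holf bnd by (intro Cauchy_inequality_ball) (auto intro!: holomorphic_intros holomorphic_deriv)
  then show ?thesis
    unfolding higher_deriv_z_deriv_minus_at_0[OF holf open_ball centre_in_ball[THEN iffD2, OF zero_less_one]]
    by (simp add: taylor_coef_def norm_mult norm_divide field_simps)
qed

lemma norm_taylor_coef_deriv_le:
  fixes f :: "complex \<Rightarrow> complex"
  assumes holf: "f holomorphic_on ball 0 1"
    and bnd: "\<And>w. w \<in> ball 0 1 \<Longrightarrow> norm (w * deriv f w - f w) \<le> M"
    and "m \<ge> 1"
  shows "norm (taylor_coef (deriv f) m) \<le> (real m + 1) / real m * M"
proof -
  have "real m * norm (taylor_coef f (Suc m)) \<le> M"
    using norm_taylor_coef_le[OF holf bnd, of "Suc m"] by (simp add: norm_mult)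
  then have "(real m + 1) * (real m * norm (taylor_coef f (Suc m))) \<le> (real m + 1) * M"
    by (intro mult_left_mono) auto
  moreover have "norm (taylor_coef (deriv f) m) = (real m + 1) * norm (taylor_coef f (Suc m))"
    by (simp only: taylor_coef_deriv norm_mult norm_of_nat) simp
  ultimately show ?thesis
    using \<open>m \<ge> 1\<close> by (simp add: field_simps)
qed

lemma norm_minus_taylor_polynomial_le:
  fixes g :: "complex \<Rightarrow> complex"
  assumes holg: "g holomorphic_on ball 0 1" and z: "norm z < 1"
    and coef: "\<And>m. m \<ge> n \<Longrightarrow> norm (taylor_coef g m) \<le> c"
  shows "norm (g z - (\<Sum>m<n. taylor_coef g m * z ^ m)) \<le> c * norm z ^ n / (1 - norm z)"
proof -
  have "(\<lambda>m. taylor_coef g m * z ^ m) sums g z"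
    using holomorphic_power_series[OF holg, of z] z by (simp add: taylor_coef_def)
  then have tail: "(\<lambda>i. taylor_coef g (i + n) * z ^ (i + n))
      sums (g z - (\<Sum>m<n. taylor_coef g m * z ^ m))"
    by (rule sums_split_initial_segment)
  have geo: "(\<lambda>i. c * norm z ^ n * norm z ^ i) sums (c * norm z ^ n / (1 - norm z))"
    using sums_mult[OF geometric_sums, of "norm z" "c * norm z ^ n"] z by (simp add: field_simps)
  have "norm (taylor_coef g (i + n) * z ^ (i + n)) \<le> c * norm z ^ n * norm z ^ i" for i
  proof -
    have "norm (taylor_coef g (i + n) * z ^ (i + n)) = norm (taylor_coef g (i + n)) * norm z ^ (i + n)"
      by (simp add: norm_mult norm_power)
    also have "\<dots> \<le> c * norm z ^ (i + n)"
      using coef[of "i + n"] by (intro mult_right_mono) auto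
    finally show ?thesis
      by (simp add: power_add mult_ac)
  qed
  then have "norm (\<Sum>i. taylor_coef g (i + n) * z ^ (i + n)) \<le> (\<Sum>i. c * norm z ^ n * norm z ^ i)"
    using geo by (intro norm_suminf_le) (auto simp: sums_iff)
  then show ?thesis
    using tail geo by (simp add: sums_iff)
qed

lemma deriv_partial_sum:
  fixes f :: "complex \<Rightarrow> complex"
  assumes "f 0 = 0" "deriv f 0 = 1" "n \<ge> 1"
  shows "deriv (partial_sum f n) z = (\<Sum>m<n. taylor_coef (deriv f) m * z ^ m)"
proof -
  have "partial_sum f n w = (\<Sum>k<Suc n. taylor_coef f k * w ^ k)" for w
  proof -
    have "{..<Suc n} = {0, 1} \<union> {2..n}"
      using \<open>n \<ge> 1\<close> by auto
    then show ?thesis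
      using assms by (simp add: partial_sum_def sum.union_disjoint taylor_coef_def)
  qed
  then have "partial_sum f n = (\<lambda>w. \<Sum>k<Suc n. taylor_coef f k * w ^ k)" ..
  moreover have "((\<lambda>w. \<Sum>k<Suc n. taylor_coef f k * w ^ k) has_field_derivative
      (\<Sum>k<Suc n. taylor_coef f k * (of_nat k * z ^ (k - 1)))) (at z)"
    by (intro DERIV_sum DERIV_cmult) (use DERIV_power[OF DERIV_ident] in simp)
  ultimately have "deriv (partial_sum f n) z = (\<Sum>k<Suc n. taylor_coef f k * (of_nat k * z ^ (k - 1)))"
    by (simp add: DERIV_imp_deriv)
  also have "\<dots> = (\<Sum>m<n. of_nat (Suc m) * taylor_coef f (Suc m) * z ^ m)"
    by (subst sum.lessThan_Suc_shift) (simp add: mult_ac)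
  finally show ?thesis
    by (simp add: taylor_coef_deriv)
qed

lemma norm_slope_minus_one_le:
  fixes f :: "complex \<Rightarrow> complex"
  assumes holf: "f holomorphic_on ball 0 1" and f0: "f 0 = 0" and f'0: "deriv f 0 = 1"
    and bnd: "\<And>w. w \<in> ball 0 1 \<Longrightarrow> norm (w * deriv f w - f w) \<le> M * norm w ^ 2"
    and z: "norm z < 1" "z \<noteq> 0"
  shows "norm (f z / z - 1) \<le> M * norm z"
proof -
  define g where "g = (\<lambda>w. if w = 0 then deriv f 0 else (f w - f 0) / (w - 0))"
  have holg: "g holomorphic_on ball 0 1"
    unfolding g_def by (rule pole_lemma[OF holf]) simp
  have g_eq: "g w = f w / w" if "w \<noteq> 0" for w
    using that f0 by (simp add: g_def)
  have deriv_g_le: "norm (deriv g w) \<le> M" if w: "w \<in> ball 0 1" "w \<noteq> 0" for w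
  proof -
    have "(f has_field_derivative deriv f w) (at w)"
      using holf w by (intro holomorphic_derivI) auto
    then have "((\<lambda>w. f w / w) has_field_derivative (w * deriv f w - f w) / w ^ 2) (at w)"
      using w by (auto intro!: derivative_eq_intros simp: power2_eq_square algebra_simps)
    then have "(g has_field_derivative (w * deriv f w - f w) / w ^ 2) (at w)"
      by (rule has_field_derivative_transform_within_open[where S = "ball 0 1 - {0}"])
        (use w g_eq in auto)
    then have "norm (deriv g w) = norm (w * deriv f w - f w) / norm w ^ 2"
      by (simp add: DERIV_imp_deriv norm_divide norm_power)
    also have "\<dots> \<le> M * norm w ^ 2 / norm w ^ 2"
      using bnd[OF w(1)] by (intro divide_right_mono) auto
    finally show ?thesis
      using w by simp
  qed
  have "norm (deriv g 0) \<le> M"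
  proof (rule Lim_norm_ubound[OF at_neq_bot])
    have "deriv g holomorphic_on ball 0 1"
      using holg by (simp add: holomorphic_deriv)
    then have "isCont (deriv g) 0"
      by (intro continuous_on_interior[OF holomorphic_on_imp_continuous_on]) auto
    then show "(deriv g \<longlongrightarrow> deriv g 0) (at 0)"
      by (simp add: isCont_def)
    have "\<forall>\<^sub>F w in at (0::complex). w \<in> ball 0 1 - {0}"
      by (rule eventually_at_in_open) auto
    then show "\<forall>\<^sub>F w in at 0. norm (deriv g w) \<le> M"
      by eventually_elim (use deriv_g_le in auto)
  qed
  then have "norm (g z - g 0) \<le> M * norm (z - 0)"
    using z deriv_g_le holg
    by (intro field_differentiable_bound[where S = "ball 0 1" and f' = "deriv g"])
      (auto intro: holomorphic_derivI)
  then show ?thesis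
    using z f0 f'0 by (simp add: g_def)
qed

lemma norm_deriv_ge:
  fixes f :: "complex \<Rightarrow> complex"
  assumes holf: "f holomorphic_on ball 0 1" and f0: "f 0 = 0" and f'0: "deriv f 0 = 1"
    and bnd: "\<And>w. w \<in> ball 0 1 \<Longrightarrow> norm (w * deriv f w - f w) \<le> M * norm w ^ 2"
    and z: "norm z < 1"
  shows "1 - 2 * M * norm z \<le> norm (deriv f z)"
proof (cases "z = 0")
  case True
  then show ?thesis
    using f'0 by simp
next
  case False
  define a where "a = f z / z - 1"
  define b where "b = (z * deriv f z - f z) / z"
  have "1 = deriv f z - a - b"
    using False by (simp add: a_def b_def field_simps)
  also have "norm (deriv f z - a - b) \<le> norm (deriv f z) + norm a + norm b"
    by (rule order_trans[OF norm_triangle_ineq4]) (simp add: norm_triangle_ineq4)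
  moreover have "norm b \<le> M * norm z"
    using bnd[of z] False z by (simp add: b_def norm_divide power2_eq_square field_simps)
  moreover have "norm a \<le> M * norm z"
    unfolding a_def using False z by (intro norm_slope_minus_one_le[OF holf f0 f'0 bnd])
  ultimately show ?thesis
    by simp
qed

lemma div_one_minus_square_le:
  fixes c r t :: real
  assumes "0 \<le> c" "0 \<le> t" "t < r" "r < 1"
  shows "c / (1 - t)^2 \<le> c + 2 * c * r / (1 - r) * t / (r - t)"
proof -
  have pos: "0 < (1 - t)^2" "0 < (1 - r) * (r - t)"
    using assms by auto
  have "(2 - t) * (r - t) * (1 - r) \<le> 2 * (r * (1 - t)) * (1 - t)"
  proof (intro mult_mono)
    show "r - t \<le> r * (1 - t)"
      using assms mult_right_mono[of r 1 t] by (simp add: algebra_simps)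
  qed (use assms in auto)
  then have "c * t * ((2 - t) * (r - t) * (1 - r)) \<le> c * t * (2 * r * (1 - t)^2)"
    using assms by (intro mult_left_mono) (auto simp: power2_eq_square algebra_simps)
  then have "c * t * (2 - t) / (1 - t)^2 \<le> 2 * c * r / (1 - r) * t / (r - t)"
    using pos by (simp add: divide_le_eq le_divide_eq ac_simps)
  moreover have "c / (1 - t)^2 = c + c * t * (2 - t) / (1 - t)^2"
    using pos by (simp add: field_simps) (simp add: power2_eq_square algebra_simps)
  ultimately show ?thesis
    by simp
qed

lemma Bn_ge:
  fixes r :: real and n :: nat
  assumes "0 < r" "r < 1" "n \<ge> 2"
  shows "2 * ((real n + 1) / (2 * real n)) * r / (1 - r)
    \<le> sqrt (2 * r - r^2) / (2 * (1 - r) * r ^ n) * (real n + 1 + ln (real n - 1) + euler_mascheroni)"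
proof -
  define S where "S = sqrt (2 * r - r^2) / r ^ n"
  have "r \<le> sqrt (2 * r - r^2)"
    using assms by (intro real_le_rsqrt) (simp add: power2_eq_square algebra_simps)
  also have "\<dots> \<le> S"
    using assms unfolding S_def by (intro mult_imp_le_div_pos mult_left_le power_le_one)
      (auto simp: power2_eq_square)
  finally have "r \<le> S" .
  have "real n + 1 \<le> real n + 1 + ln (real n - 1) + euler_mascheroni"
    using assms euler_mascheroni_pos by (simp add: ln_ge_zero)
  have "2 * ((real n + 1) / (2 * real n)) * r / (1 - r) = (real n + 1) / real n * (r / (1 - r))"
    using assms by (simp add: field_simps)
  also have "\<dots> \<le> (real n + 1) / 2 * (r / (1 - r))"
    using assms by (intro mult_right_mono divide_left_mono) auto
  also have "\<dots> \<le> (real n + 1 + ln (real n - 1) + euler_mascheroni) / 2 * (S / (1 - r))"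
    using assms \<open>r \<le> S\<close> \<open>real n + 1 \<le> _\<close> by (intro mult_mono divide_right_mono) auto
  also have "\<dots> = sqrt (2 * r - r^2) / (2 * (1 - r) * r ^ n)
      * (real n + 1 + ln (real n - 1) + euler_mascheroni)"
    by (simp add: S_def algebra_simps)
  finally show ?thesis .
qed

lemma norm_deriv_partial_sum_div_minus_one_le:
  fixes f :: "complex \<Rightarrow> complex"
  assumes holf: "f holomorphic_on ball 0 1" and f0: "f 0 = 0" and f'0: "deriv f 0 = 1"
    and bnd: "\<And>w. w \<in> ball 0 1 \<Longrightarrow> norm (w * deriv f w - f w) \<le> M * norm w ^ 2"
    and "0 \<le> M" "n \<ge> 1" "norm z < 1" "2 * M * norm z < 1"
  shows "norm (deriv (partial_sum f n) z / deriv f z - 1)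
    \<le> (real n + 1) / real n * M * norm z ^ n / ((1 - norm z) * (1 - 2 * M * norm z))"
proof -
  define t where "t = norm z"
  define c where "c = (real n + 1) / real n * M"
  have t: "0 \<le> t" "t < 1" "2 * M * t < 1"
    using assms by (auto simp: t_def)
  have coef: "norm (taylor_coef (deriv f) m) \<le> c" if "m \<ge> n" for m
  proof -
    have "norm (w * deriv f w - f w) \<le> M" if "w \<in> ball 0 1" for w
      using bnd[OF that] that \<open>0 \<le> M\<close> power_le_one[of "norm w" 2] mult_left_le[of "norm w ^ 2" M]
      by simp
    then have "norm (taylor_coef (deriv f) m) \<le> (real m + 1) / real m * M"
      using that assms by (intro norm_taylor_coef_deriv_le[OF holf]) auto
    also have "\<dots> \<le> c"
      unfolding c_def using that assms by (intro mult_right_mono) (auto simp: field_simps)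
    finally show ?thesis .
  qed
  have "norm (deriv f z - deriv (partial_sum f n) z) \<le> c * t ^ n / (1 - t)"
    using norm_minus_taylor_polynomial_le[OF holomorphic_deriv[OF holf open_ball] _ coef]
      deriv_partial_sum[OF f0 f'0] assms by (simp add: t_def)
  moreover have "1 - 2 * M * t \<le> norm (deriv f z)"
    using norm_deriv_ge[OF holf f0 f'0 bnd] assms by (simp add: t_def)
  ultimately have "norm (deriv f z - deriv (partial_sum f n) z) / norm (deriv f z)
      \<le> c * t ^ n / (1 - t) / (1 - 2 * M * t)"
    using t \<open>0 \<le> M\<close> by (intro frac_le) (auto simp: c_def)
  moreover have "deriv f z \<noteq> 0"
    using \<open>1 - 2 * M * t \<le> norm (deriv f z)\<close> t by auto
  then have "deriv (partial_sum f n) z / deriv f z - 1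
      = (deriv (partial_sum f n) z - deriv f z) / deriv f z"
    by (simp add: field_simps)
  ultimately show ?thesis
    by (simp add: norm_divide norm_minus_commute c_def t_def)
qed

theorem theorem3p2:
  fixes f \<phi> :: "complex \<Rightarrow> complex" and r :: real and n :: nat and z :: complex
  assumes "f holomorphic_on ball 0 1"
    and "f 0 = 0" and "deriv f 0 = 1"
    and "\<phi> holomorphic_on ball 0 1"
    and "\<forall>w\<in>ball 0 1. norm (\<phi> w) \<le> 1"
    and "\<forall>w\<in>ball 0 1. w * deriv f w - f w = 1/2 * w^2 * \<phi> w"
    and "0 < r" and "r < 1" and "n \<ge> 2"
    and "norm z < r"
  shows "norm (deriv (partial_sum f n) z / deriv f z - 1)
     \<le> norm z ^ n * ((real n + 1) / (2 * real n)
        + (sqrt (2 * r - r^2) / (2 * (1 - r) * r ^ n)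
             * (real n + 1 + ln (real n - 1) + euler_mascheroni))
          * norm z / (r - norm z))"
proof -
  define t where "t = norm z"
  define c where "c = (real n + 1) / (2 * real n)"
  have t: "0 \<le> t" "t < r" "t < 1"
    using assms(8,10) by (auto simp: t_def)
  have bnd: "norm (w * deriv f w - f w) \<le> 1/2 * norm w ^ 2" if "w \<in> ball 0 1" for w
  proof -
    have "norm (w * deriv f w - f w) = 1/2 * norm w ^ 2 * norm (\<phi> w)"
      using assms(6) that by (simp only: norm_mult norm_power) simp
    also have "\<dots> \<le> 1/2 * norm w ^ 2"
      using assms(5) that by (simp add: mult_left_le)
    finally show ?thesis .
  qed
  have "norm (deriv (partial_sum f n) z / deriv f z - 1) \<le> t ^ n * (c / (1 - t)^2)"
    using norm_deriv_partial_sum_div_minus_one_le[OF assms(1-3) bnd, of n z] assms(9) t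
    by (simp add: t_def c_def power2_eq_square mult_ac)
  also have "\<dots> \<le> t ^ n * (c + 2 * c * r / (1 - r) * t / (r - t))"
    using div_one_minus_square_le[of c t r] assms(8) t by (intro mult_left_mono) (auto simp: c_def)
  also have "\<dots> \<le> t ^ n * (c + (sqrt (2 * r - r^2) / (2 * (1 - r) * r ^ n)
             * (real n + 1 + ln (real n - 1) + euler_mascheroni)) * t / (r - t))"
    using Bn_ge[OF assms(7-9), folded c_def] t
    by (intro mult_left_mono add_left_mono divide_right_mono mult_right_mono) auto
  finally show ?thesis
    unfolding t_def c_def .
qed

end
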